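(* There exists an absolute constant $C>0$ such that for every nonempty set $J$ of positive integers, $$\int_0^1\Big|\sum_{n\in J}\frac{1}{n^2}\cos nt\Big|\,{\rm d}t\ \ge\ C\Big(\sum_{n\in J}\frac1{n^2}\Big)^2.$$ *)

theory Defs
  imports "HOL-Analysis.Analysis"
begin

end

theory Submission
  imports Defs
begin

(*
  Write w n = 1/n^2 for n in J (and 0 otherwise), S = \<Sum> w n and f t = \<Sum> w n cos (n t).
  The key estimate is that f cannot drop quickly near t = 0:
      S - f t = \<Sum> w n (1 - cos (n t)) \<le> 5 t     for 0 \<le> t \<le> 1,
  obtained by bounding the terms n < M by (n t)^2/2 * w n \<le> t^2/2 and the terms n \<ge> M
  by 2 w n, whose sum is at most 4/M by telescoping; the choice M = \<lceil>1/t\<rceil> gives 5 t.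
*)

lemma one_minus_cos_le: "1 - cos (x::real) \<le> x^2 / 2"
proof -
  have "cos x = 1 - 2 * sin (x/2)^2" using cos_double_sin[of "x/2"] by simp
  moreover have "sin (x/2)^2 \<le> (x/2)^2"
    using abs_sin_x_le_abs_x[of "x/2"] by (metis abs_ge_zero power2_abs power_mono)
  ultimately show ?thesis by (simp add: power_divide)
qed

text \<open>Convergence of \<open>\<Sum> 1/n\<^sup>2\<close> (the \<open>n = 0\<close> term is \<open>1/0 = 0\<close>).\<close>

lemma summable_inverse_squares: "summable (\<lambda>n. 1 / (real n)^2)"
  using inverse_power_summable[of 2, where 'a=real] by (simp add: inverse_eq_divide)

text \<open>Tail estimate \<open>\<Sum>\<^sub>n\<^sub>\<ge>\<^sub>M 2/n\<^sup>2 \<le> 4/M\<close>, by comparison with the telescoping series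
  \<open>4 (1/n - 1/(n+1))\<close>.\<close>

lemma inverse_squares_tail_bound:
  fixes M :: nat assumes M: "M \<ge> 1"
  shows "summable (\<lambda>n. 2 / (real (n+M))^2)" and "(\<Sum>n. 2 / (real (n+M))^2) \<le> 4 / real M"
proof -
  define g where "g n = 1 / real (n + M)" for n
  have "g \<longlonglongrightarrow> 0" unfolding g_def
    by (intro LIMSEQ_ignore_initial_segment[where k=M, simplified] lim_inverse_n')
  hence telescope: "(\<lambda>n. 4 * (g n - g (Suc n))) sums (4 * g 0)"
    using sums_mult[OF telescope_sums', of g 0 4] by simp
  have term_le: "2 / (real (n+M))^2 \<le> 4 * (g n - g (Suc n))" for n
  proof -
    have x1: "real (n+M) \<ge> 1" using M by simp
    have "g n - g (Suc n) = 1 / (real (n+M) * (real (n+M) + 1))"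
      unfolding g_def using x1 by (simp add: field_simps)
    moreover have "\<And>x::real. x \<ge> 1 \<Longrightarrow> 2 / x^2 \<le> 4 / (x * (x+1))"
      by (simp add: divide_simps power2_eq_square)
    ultimately show ?thesis using x1 by simp
  qed
  show sm: "summable (\<lambda>n. 2 / (real (n+M))^2)"
    by (rule summable_comparison_test[OF _ sums_summable[OF telescope]]) (use term_le in auto)
  have "(\<Sum>n. 2 / (real (n+M))^2) \<le> (\<Sum>n. 4 * (g n - g (Suc n)))"
    by (rule suminf_le[OF term_le sm sums_summable[OF telescope]])
  also have "\<dots> = 4 / real M" using sums_unique[OF telescope] by (simp add: g_def)
  finally show "(\<Sum>n. 2 / (real (n+M))^2) \<le> 4 / real M" .
qed

text \<open>A crude bound \<open>\<Sum> 1/n\<^sup>2 \<le> 2\<close>; it guarantees that the interval \<open>[0, S/10]\<close>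
  used below lies inside \<open>[0,1]\<close>.\<close>

lemma sum_inverse_squares_le_2: "(\<Sum>n. 1 / (real n)^2) \<le> 2"
proof -
  have "(\<Sum>n. 1 / (real n)^2) = (\<Sum>n. 1 / (real (n+1))^2) + (\<Sum>i<1. 1 / (real i)^2)"
    by (rule suminf_split_initial_segment[OF summable_inverse_squares])
  also have "\<dots> = (\<Sum>n. 2 / (real (n+1))^2) / 2"
    using suminf_divide[OF inverse_squares_tail_bound(1)[of 1], of 2] by simp
  also have "\<dots> \<le> 2" using inverse_squares_tail_bound(2)[of 1] by simp
  finally show ?thesis .
qed

text \<open>Defect bound with a free cut-off \<open>M\<close>: the terms below \<open>M\<close> contribute at most
  \<open>t\<^sup>2/2\<close> each, the terms from \<open>M\<close> on at most \<open>4/M\<close> in total.\<close>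

lemma cosine_defect_bound_cutoff:
  fixes w :: "nat \<Rightarrow> real" and t :: real and M :: nat
  assumes w0: "\<And>n. 0 \<le> w n" and w1: "\<And>n. w n \<le> 1 / (real n)^2" and M: "M \<ge> 1"
  shows "summable (\<lambda>n. w n * (1 - cos (real n * t)))"
    and "(\<Sum>n. w n * (1 - cos (real n * t))) \<le> real M * t^2 / 2 + 4 / real M"
proof -
  define a where "a n = w n * (1 - cos (real n * t))" for n
  have a_le_2w: "a n \<le> 2 / (real n)^2" for n
  proof -
    have "a n \<le> w n * 2" unfolding a_def
      using w0[of n] cos_ge_minus_one[of "real n * t"] by (intro mult_left_mono) linarith+
    thus ?thesis using w1[of n] by simp
  qed
  have a_le_quadratic: "a n \<le> t^2 / 2" for n
  proof (cases "n = 0")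
    case True then show ?thesis using w1[of 0] w0[of 0] by (simp add: a_def)
  next
    case False
    have "a n \<le> (1 / (real n)^2) * ((real n * t)^2 / 2)" unfolding a_def
      by (rule mult_mono) (use w1[of n] w0[of n] one_minus_cos_le[of "real n * t"] in auto)
    also have "\<dots> = t^2 / 2" using False by (simp add: power_mult_distrib)
    finally show ?thesis .
  qed
  have sa: "summable a"
    by (rule summable_comparison_test[OF _ summable_mult[OF summable_inverse_squares, of 2]])
       (use w0 a_le_2w in \<open>auto simp: a_def\<close>)
  then show "summable (\<lambda>n. w n * (1 - cos (real n * t)))" unfolding a_def by simp
  have "suminf a = (\<Sum>n. a (n + M)) + (\<Sum>i<M. a i)"
    by (rule suminf_split_initial_segment[OF sa])
  also have "(\<Sum>n. a (n + M)) \<le> (\<Sum>n. 2 / (real (n+M))^2)"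
    by (rule suminf_le[OF a_le_2w _ inverse_squares_tail_bound(1)[OF M]])
       (use sa in \<open>simp add: summable_iff_shift\<close>)
  also have "\<dots> \<le> 4 / real M" by (rule inverse_squares_tail_bound(2)[OF M])
  also have "(\<Sum>i<M. a i) \<le> real M * t^2 / 2"
    using sum_mono[of "{..<M}" a "\<lambda>_. t^2 / 2"] a_le_quadratic by simp
  finally have "suminf a \<le> real M * t^2 / 2 + 4 / real M" by simp
  then show "(\<Sum>n. w n * (1 - cos (real n * t))) \<le> real M * t^2 / 2 + 4 / real M"
    unfolding a_def .
qed

text \<open>With \<open>M = \<lceil>1/t\<rceil>\<close> the defect is at most \<open>5 t\<close> on \<open>[0,1]\<close>.\<close>

lemma cosine_defect_bound:
  fixes w :: "nat \<Rightarrow> real" and t :: real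
  assumes w0: "\<And>n. 0 \<le> w n" and w1: "\<And>n. w n \<le> 1 / (real n)^2"
    and t: "0 \<le> t" "t \<le> 1"
  shows "summable (\<lambda>n. w n * (1 - cos (real n * t)))"
    and "(\<Sum>n. w n * (1 - cos (real n * t))) \<le> 5 * t"
proof -
  show "summable (\<lambda>n. w n * (1 - cos (real n * t)))"
    by (rule cosine_defect_bound_cutoff(1)[OF w0 w1, of 1]) simp
  show "(\<Sum>n. w n * (1 - cos (real n * t))) \<le> 5 * t"
  proof (cases "t = 0")
    case True then show ?thesis by simp
  next
    case False
    with t have tp: "t > 0" by simp
    define M where "M = nat \<lceil>1 / t\<rceil>"
    have "1 / t \<ge> 1" using tp t by simp
    then have M_real: "real M = of_int \<lceil>1 / t\<rceil>" unfolding M_def by simp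
    have M_lower: "real M \<ge> 1 / t" and M_upper: "real M \<le> 1 / t + 1"
      unfolding M_real by linarith+
    have M1: "M \<ge> 1" using M_lower \<open>1 / t \<ge> 1\<close> by simp
    have "4 / real M \<le> 4 / (1 / t)"
      by (rule divide_left_mono) (use M_lower tp M1 in auto)
    then have "4 / real M \<le> 4 * t" by simp
    moreover have "real M * t^2 / 2 \<le> (1 / t + 1) * t^2 / 2"
      by (intro divide_right_mono mult_right_mono M_upper) auto
    moreover have "(1 / t + 1) * t^2 / 2 = t / 2 + t^2 / 2"
      using tp by (simp add: field_simps power2_eq_square)
    moreover have "t^2 \<le> t" using t mult_left_le_one_le[of t t] by (simp add: power2_eq_square)
    ultimately show ?thesis using cosine_defect_bound_cutoff(2)[OF w0 w1 M1, of t] by linarith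
  qed
qed

lemma cosine_series_summable:
  fixes w :: "nat \<Rightarrow> real"
  assumes "\<And>n. 0 \<le> w n" and "summable w"
  shows "summable (\<lambda>n. norm (w n * cos (real n * t)))"
  by (rule summable_comparison_test[OF _ assms(2)])
     (use assms(1) in \<open>auto simp: abs_mult intro!: mult_left_le[OF abs_cos_le_one]\<close>)

lemma cosine_series_lower_bound:
  fixes w :: "nat \<Rightarrow> real"
  assumes w0: "\<And>n. 0 \<le> w n" and w1: "\<And>n. w n \<le> 1 / (real n)^2" and t: "0 \<le> t" "t \<le> 1"
  shows "(\<Sum>n. w n * cos (real n * t)) \<ge> suminf w - 5 * t"
proof -
  have sw: "summable w"
    by (rule summable_comparison_test[OF _ summable_inverse_squares]) (use w0 w1 in auto)
  have "suminf w - (\<Sum>n. w n * cos (real n * t)) = (\<Sum>n. w n - w n * cos (real n * t))"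
    by (rule suminf_diff[OF sw summable_norm_cancel[OF cosine_series_summable[OF w0 sw]]])
  also have "\<dots> = (\<Sum>n. w n * (1 - cos (real n * t)))" by (simp add: algebra_simps)
  also have "\<dots> \<le> 5 * t" by (rule cosine_defect_bound(2)[OF w0 w1 t])
  finally show ?thesis by simp
qed

lemma cosine_series_continuous:
  fixes w :: "nat \<Rightarrow> real"
  assumes w0: "\<And>n. 0 \<le> w n" and sw: "summable w"
  shows "continuous_on S (\<lambda>t. \<Sum>n. w n * cos (real n * t))"
proof (rule uniform_limit_theorem[where F=sequentially])
  show "\<forall>\<^sub>F n in sequentially. continuous_on S (\<lambda>t. \<Sum>i<n. w i * cos (real i * t))"
    by (intro always_eventually allI) (auto intro!: continuous_intros)
  show "uniform_limit S (\<lambda>n t. \<Sum>i<n. w i * cos (real i * t))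
          (\<lambda>t. \<Sum>n. w n * cos (real n * t)) sequentially"
    by (rule Weierstrass_m_test[OF _ sw])
       (use w0 in \<open>auto simp: abs_mult intro!: mult_left_le[OF abs_cos_le_one]\<close>)
qed simp

text \<open>A continuous function lying above the line \<open>S - 5 t\<close> on \<open>[0,1]\<close>, with
  \<open>0 \<le> S \<le> 10\<close>, has \<open>|f| \<ge> S/2\<close> on \<open>[0, S/10]\<close>, hence \<open>\<integral>\<^sub>0\<^sup>1 |f| \<ge> S\<^sup>2/20\<close>.\<close>

lemma integral_abs_ge_of_linear_lower_bound:
  fixes f :: "real \<Rightarrow> real"
  assumes cont: "continuous_on {0..1} f" and S: "0 \<le> S" "S \<le> 10"
    and above: "\<And>t. 0 \<le> t \<Longrightarrow> t \<le> 1 \<Longrightarrow> f t \<ge> S - 5 * t"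
  shows "integral {0..1} (\<lambda>t. \<bar>f t\<bar>) \<ge> S^2 / 20"
proof -
  define F where "F t = \<bar>f t\<bar>" for t
  define t0 where "t0 = S / 10"
  have t0: "0 \<le> t0" "t0 \<le> 1" using S by (auto simp: t0_def)
  have cF: "continuous_on {0..1} F" unfolding F_def by (intro continuous_intros cont)
  have cF_sub: "continuous_on {a..b} F" if "0 \<le> a" "b \<le> 1" for a b
    by (rule continuous_on_subset[OF cF]) (use that in auto)
  have "integral {0..t0} (\<lambda>_. S / 2) \<le> integral {0..t0} F"
  proof (rule integral_le[OF _ integrable_continuous_interval[OF cF_sub]])
    fix x assume x: "x \<in> {0..t0}"
    then have "f x \<ge> S - 5 * x" using above t0 by auto
    moreover have "5 * x \<le> S / 2" using x by (auto simp: t0_def)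
    ultimately show "S / 2 \<le> F x" unfolding F_def by linarith
  qed (use t0 in auto)
  moreover have "integral {0..t0} (\<lambda>_. S / 2) = S^2 / 20"
    using t0 by (simp add: t0_def power2_eq_square)
  moreover have "0 \<le> integral {t0..1} F"
    by (rule integral_nonneg[OF integrable_continuous_interval[OF cF_sub]])
       (use t0 in \<open>auto simp: F_def\<close>)
  moreover have "integral {0..t0} F + integral {t0..1} F = integral {0..1} F"
    by (rule Henstock_Kurzweil_Integration.integral_combine[OF t0
          integrable_continuous_interval[OF cF]])
  ultimately show ?thesis unfolding F_def by linarith
qed

definition inverse_square_weight :: "nat set \<Rightarrow> nat \<Rightarrow> real" where
  "inverse_square_weight J n = (if n \<in> J then 1 / (real n)^2 else 0)"

lemma inverse_square_weight_bounds:
  "0 \<le> inverse_square_weight J n" "inverse_square_weight J n \<le> 1 / (real n)^2"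
  by (simp_all add: inverse_square_weight_def)

lemma summable_inverse_square_weight: "summable (inverse_square_weight J)"
  by (rule summable_comparison_test[OF _ summable_inverse_squares])
     (use inverse_square_weight_bounds in auto)

lemma infsum_eq_suminf_extension:
  fixes g :: "nat \<Rightarrow> real" and J :: "nat set"
  assumes "summable (\<lambda>n. norm (if n \<in> J then g n else 0))"
  shows "(\<Sum>\<^sub>\<infinity>n\<in>J. g n) = (\<Sum>n. if n \<in> J then g n else 0)"
proof -
  have "(\<Sum>\<^sub>\<infinity>n\<in>J. g n) = (\<Sum>\<^sub>\<infinity>n\<in>UNIV. if n \<in> J then g n else 0)"
    by (rule infsum_cong_neutral) auto
  also have "\<dots> = (\<Sum>n. if n \<in> J then g n else 0)"
    by (rule infsumI, rule norm_summable_imp_has_sum[OF assms summable_sums])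
       (rule summable_norm_cancel[OF assms])
  finally show ?thesis .
qed

lemma infsum_cos_eq_weighted_series:
  "(\<Sum>\<^sub>\<infinity>n\<in>J. cos (real n * t) / (real n)^2)
     = (\<Sum>n. inverse_square_weight J n * cos (real n * t))"
proof -
  have "(if n \<in> J then cos (real n * t) / (real n)^2 else 0)
          = inverse_square_weight J n * cos (real n * t)" for n
    by (simp add: inverse_square_weight_def)
  then show ?thesis
    using infsum_eq_suminf_extension[of J "\<lambda>n. cos (real n * t) / (real n)^2"]
      cosine_series_summable[OF inverse_square_weight_bounds(1)
        summable_inverse_square_weight, of J t]
    by simp
qed

lemma inverse_square_weight_sum_pos:
  fixes J :: "nat set"
  assumes "J \<noteq> {}" "0 \<notin> J"
  shows "suminf (inverse_square_weight J) > 0"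
proof -
  obtain m where m: "m \<in> J" using assms(1) by blast
  moreover from m assms(2) have "m \<noteq> 0" by (metis)
  ultimately have "inverse_square_weight J m > 0" by (auto simp: inverse_square_weight_def)
  also have "inverse_square_weight J m \<le> suminf (inverse_square_weight J)"
    using sum_le_suminf[OF summable_inverse_square_weight, of "{m}" J]
      inverse_square_weight_bounds(1) by simp
  finally show ?thesis .
qed

lemma inverse_square_weight_sum_le_2: "suminf (inverse_square_weight J) \<le> 2"
  using suminf_le[OF inverse_square_weight_bounds(2)[of J] summable_inverse_square_weight
      summable_inverse_squares] sum_inverse_squares_le_2 by linarith

theorem mainTheorem11:
  shows "\<exists>C>0. \<forall>J :: nat set. J \<noteq> {} \<and> 0 \<notin> J \<longrightarrow>
    integral {0..1} (\<lambda>t::real. \<bar>\<Sum>\<^sub>\<infinity>n\<in>J. cos (real n * t) / (real n)^2\<bar>)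
      \<ge> C * (\<Sum>\<^sub>\<infinity>n\<in>J. 1 / (real n)^2)^2"
proof (intro exI[of _ "1/20"] conjI allI impI)
  fix J :: "nat set" assume hJ: "J \<noteq> {} \<and> 0 \<notin> J"
  let ?w = "inverse_square_weight J"
  let ?f = "\<lambda>t. \<Sum>n. ?w n * cos (real n * t)"
  have sum_eq: "(\<Sum>\<^sub>\<infinity>n\<in>J. 1 / (real n)^2) = suminf ?w"
    using infsum_cos_eq_weighted_series[where J=J and t=0] by simp
  have "integral {0..1} (\<lambda>t. \<bar>?f t\<bar>) \<ge> (suminf ?w)^2 / 20"
  proof (rule integral_abs_ge_of_linear_lower_bound)
    show "continuous_on {0..1} ?f"
      by (rule cosine_series_continuous[OF inverse_square_weight_bounds(1)
            summable_inverse_square_weight])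
    show "0 \<le> suminf ?w" using inverse_square_weight_sum_pos hJ by (simp add: less_imp_le)
    show "suminf ?w \<le> 10" using inverse_square_weight_sum_le_2[of J] by simp
    show "suminf ?w - 5 * t \<le> ?f t" if "0 \<le> t" "t \<le> 1" for t
      by (rule cosine_series_lower_bound[OF inverse_square_weight_bounds that])
  qed
  then show "integral {0..1} (\<lambda>t::real. \<bar>\<Sum>\<^sub>\<infinity>n\<in>J. cos (real n * t) / (real n)^2\<bar>)
      \<ge> 1/20 * (\<Sum>\<^sub>\<infinity>n\<in>J. 1 / (real n)^2)^2"
    unfolding sum_eq infsum_cos_eq_weighted_series by simp
qed simp

end
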